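(* Work in a saturated structure. Let $G$ be a definable commutative group and $v:G\to I$ a definable function into a definable totally ordered set $I$ such that $v(a+b)\ge\min\{v(a),v(b)\}$ and $v(-a)=v(a)$ for all $a,b\in G$, and $v(0)$ is the maximum of $I$ with $v(a)=v(0)$ only for $a=0$. For $r\in I$ let $B_r=\{a\in G: v(a)\ge r\}$ and $B_r^-=\{a\in G: v(a)>r\}$. Suppose that every definable subset of $G$ is a Boolean combination of translates of sets of the form $B_r$, $B_r^-$ ($r\in I$), $\{0\}$ and $G$, and that $B_r/B_r^-$ is infinite for every $r\in I$ with $r<v(0)$. Then every type-definable subgroup of $G$ is a small intersection of definable subgroups, and every definable subgroup of $G$ is finite, or equal to $G$, or contains some $B_r$ or some $B_r^-$ as a subgroup of finite index.
   Context: Small means of cardinality less than the saturation of the ambient model; type-definable means a small intersection of definable sets; definable means definable with parameters. *)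

theory Defs
  imports "HOL-Algebra.Group" "HOL-Library.Equipollence"
begin

text \<open>Tuples of length n over the universe (type 'm) represent M^n.\<close>

abbreviation tuples :: "nat \<Rightarrow> 'm list set" where
  "tuples n \<equiv> {xs. length xs = n}"

text \<open>A first-order structure, given by its definable-with-parameters sets
(van den Dries' axioms): D n is the family of definable subsets of M^n.\<close>

definition def_structure :: "(nat \<Rightarrow> 'm list set set) \<Rightarrow> bool" where
  "def_structure D \<longleftrightarrow>
     (\<forall>n. \<forall>A\<in>D n. A \<subseteq> tuples n) \<and>
     (\<forall>n. {} \<in> D n) \<and>
     (\<forall>n. \<forall>A\<in>D n. tuples n - A \<in> D n) \<and>
     (\<forall>n. \<forall>A\<in>D n. \<forall>B\<in>D n. A \<union> B \<in> D n) \<and>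
     (\<forall>n. \<forall>A\<in>D n. {xs @ [y] | xs y. xs \<in> A} \<in> D (Suc n)) \<and>
     (\<forall>n. \<forall>A\<in>D n. {y # xs | xs y. xs \<in> A} \<in> D (Suc n)) \<and>
     (\<forall>n i j. i < n \<longrightarrow> j < n \<longrightarrow> {xs \<in> tuples n. xs ! i = xs ! j} \<in> D n) \<and>
     (\<forall>n. \<forall>A\<in>D (Suc n). butlast ` A \<in> D n) \<and>
     (\<forall>a. {[a]} \<in> D 1)"

definition saturated :: "(nat \<Rightarrow> 'm list set set) \<Rightarrow> 'k set \<Rightarrow> bool" where
  "saturated D K \<longleftrightarrow>
     (\<forall>n F. F \<subseteq> D n \<longrightarrow> F \<prec> K \<longrightarrow>
        (\<forall>F'. finite F' \<longrightarrow> F' \<subseteq> F \<longrightarrow> tuples n \<inter> \<Inter>F' \<noteq> {}) \<longrightarrow>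
        tuples n \<inter> \<Inter>F \<noteq> {})"

definition type_definable :: "(nat \<Rightarrow> 'm list set set) \<Rightarrow> 'k set \<Rightarrow> nat \<Rightarrow> 'm list set \<Rightarrow> bool" where
  "type_definable D K n X \<longleftrightarrow> (\<exists>F. F \<subseteq> D n \<and> F \<prec> K \<and> X = tuples n \<inter> \<Inter>F)"

inductive_set boolcomb :: "'a set \<Rightarrow> 'a set set \<Rightarrow> 'a set set" for U S where
  gen: "A \<in> S \<Longrightarrow> A \<in> boolcomb U S"
| compl: "A \<in> boolcomb U S \<Longrightarrow> U - A \<in> boolcomb U S"
| union: "A \<in> boolcomb U S \<Longrightarrow> B \<in> boolcomb U S \<Longrightarrow> A \<union> B \<in> boolcomb U S"

definition cosets_in :: "('a, 'b) monoid_scheme \<Rightarrow> 'a set \<Rightarrow> 'a set \<Rightarrow> 'a set set" where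
  "cosets_in Gr A X = {(\<lambda>x. a \<otimes>\<^bsub>Gr\<^esub> x) ` X | a. a \<in> A}"

end

theory Submission
  imports Defs "HOL-Algebra.Left_Coset"
begin

text \<open>The balls \<open>B\<^sub>r\<close>, \<open>B\<^sub>r\<^sup>-\<close>, \<open>{0}\<close> and \<open>G\<close> form a chain of subgroups in which every
  strict inclusion has infinite index, and every definable set \<open>Y\<close> is determined by finitely
  many cosets of balls. If a subgroup \<open>H\<close> lies in \<open>Y\<close>, then among the balls involved there is one,
  \<open>\<beta>\<close>, of which \<open>H\<close> meets only finitely many cosets while \<open>\<beta> \<subseteq> Y + Y\<close>. For a definable
  subgroup \<open>H = Y\<close> this is the classification. For a type-definable subgroup \<open>H\<close> and a
  definable \<open>Z \<supseteq> H\<close>, saturation yields a definable \<open>Y \<supseteq> H\<close> with \<open>(Y + Y) + (Y + Y) \<subseteq> Z\<close>, and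
  then \<open>H + \<beta>\<close> is a definable subgroup between \<open>H\<close> and \<open>Z\<close>.\<close>

section \<open>Definable sets\<close>

definition definable_pred :: "(nat \<Rightarrow> 'm list set set) \<Rightarrow> nat \<Rightarrow> ('m list \<Rightarrow> bool) \<Rightarrow> bool" where
  "definable_pred D n P \<longleftrightarrow> {xs \<in> tuples n. P xs} \<in> D n"

text \<open>A term is a variable \<open>Inl i\<close>, standing for the \<open>i\<close>-th coordinate, or a parameter \<open>Inr c\<close>.\<close>

definition eval_term :: "'m list \<Rightarrow> nat + 'm \<Rightarrow> 'm" where
  "eval_term xs t = (case t of Inl i \<Rightarrow> xs ! i | Inr c \<Rightarrow> c)"

lemma map_eval_term_vars:
  "b \<le> length w \<Longrightarrow> map (eval_term w \<circ> Inl) [a..<b] = take (b - a) (drop a w)"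
  by (intro nth_equalityI) (auto simp: eval_term_def)

lemma map_eval_term_params: "map (eval_term w \<circ> Inr) cs = cs"
  by (induction cs) (auto simp: eval_term_def)

lemma append_mem_concat_iff:
  assumes "length xs = n" and "\<And>a b. P a b \<Longrightarrow> length a = n"
  shows "xs @ ys \<in> {a @ b | a b. P a b} \<longleftrightarrow> P xs ys"
proof
  assume "xs @ ys \<in> {a @ b | a b. P a b}"
  then obtain a b where "P a b" "xs @ ys = a @ b" by blast
  with assms show "P xs ys" by (metis append_eq_append_conv)
qed blast

locale definable_structure =
  fixes D :: "nat \<Rightarrow> 'm list set set"
  assumes definable_subset_tuples: "A \<in> D n \<Longrightarrow> A \<subseteq> tuples n"
    and definable_empty: "{} \<in> D n"
    and definable_Diff_tuples: "A \<in> D n \<Longrightarrow> tuples n - A \<in> D n"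
    and definable_Un: "A \<in> D n \<Longrightarrow> B \<in> D n \<Longrightarrow> A \<union> B \<in> D n"
    and definable_snoc: "A \<in> D n \<Longrightarrow> {xs @ [y] | xs y. xs \<in> A} \<in> D (Suc n)"
    and definable_Cons: "A \<in> D n \<Longrightarrow> {y # xs | xs y. xs \<in> A} \<in> D (Suc n)"
    and definable_diagonal: "i < n \<Longrightarrow> j < n \<Longrightarrow> {xs \<in> tuples n. xs ! i = xs ! j} \<in> D n"
    and definable_butlast: "A \<in> D (Suc n) \<Longrightarrow> butlast ` A \<in> D n"
    and definable_singleton: "{[a]} \<in> D 1"

lemma definable_structureI: "def_structure D \<Longrightarrow> definable_structure D"
  unfolding def_structure_def by unfold_locales simp_all

context definable_structure
begin

lemma definable_tuples: "tuples n \<in> D n"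
  using definable_Diff_tuples[OF definable_empty] by simp

lemma definable_Int: "A \<in> D n \<Longrightarrow> B \<in> D n \<Longrightarrow> A \<inter> B \<in> D n"
proof -
  assume "A \<in> D n" "B \<in> D n"
  moreover have "A \<inter> B = tuples n - ((tuples n - A) \<union> (tuples n - B))"
    using definable_subset_tuples[OF \<open>A \<in> D n\<close>] by blast
  ultimately show ?thesis by (simp add: definable_Diff_tuples definable_Un)
qed

lemma definable_finite_Union: "finite S \<Longrightarrow> S \<subseteq> D n \<Longrightarrow> \<Union>S \<in> D n"
  by (induction S rule: finite_induct) (auto simp: definable_empty definable_Un)

lemma definable_Int_finite_Inter: "finite S \<Longrightarrow> S \<subseteq> D n \<Longrightarrow> A \<in> D n \<Longrightarrow> A \<inter> \<Inter>S \<in> D n"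
proof (induction S rule: finite_induct)
  case (insert X S)
  have "A \<inter> \<Inter>(insert X S) = X \<inter> (A \<inter> \<Inter>S)" by blast
  with insert show ?case by (simp add: definable_Int)
qed simp

lemma definable_pred_mem: "A \<in> D n \<Longrightarrow> definable_pred D n (\<lambda>xs. xs \<in> A)"
proof -
  assume "A \<in> D n"
  moreover have "{xs \<in> tuples n. xs \<in> A} = A"
    using definable_subset_tuples[OF \<open>A \<in> D n\<close>] by blast
  ultimately show ?thesis by (simp add: definable_pred_def)
qed

lemma definable_pred_cong:
  "definable_pred D n P \<Longrightarrow> (\<And>xs. length xs = n \<Longrightarrow> P xs = Q xs) \<Longrightarrow> definable_pred D n Q"
proof -
  assume "definable_pred D n P" "\<And>xs. length xs = n \<Longrightarrow> P xs = Q xs"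
  moreover have "{xs \<in> tuples n. P xs} = {xs \<in> tuples n. Q xs}"
    using \<open>\<And>xs. length xs = n \<Longrightarrow> P xs = Q xs\<close> by auto
  ultimately show ?thesis by (simp add: definable_pred_def)
qed

lemma definable_pred_conj:
  "definable_pred D n P \<Longrightarrow> definable_pred D n Q \<Longrightarrow> definable_pred D n (\<lambda>xs. P xs \<and> Q xs)"
proof -
  have "{xs \<in> tuples n. P xs \<and> Q xs} = {xs \<in> tuples n. P xs} \<inter> {xs \<in> tuples n. Q xs}" by blast
  then show "definable_pred D n P \<Longrightarrow> definable_pred D n Q \<Longrightarrow> ?thesis"
    using definable_Int by (simp add: definable_pred_def)
qed

lemma definable_pred_True: "definable_pred D n (\<lambda>xs. True)"
  using definable_tuples by (simp add: definable_pred_def)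

lemma definable_pred_ex:
  "definable_pred D (n + m) P \<Longrightarrow> definable_pred D n (\<lambda>xs. \<exists>ys. length ys = m \<and> P (xs @ ys))"
proof (induction m arbitrary: P)
  case 0
  then have "definable_pred D n P" by simp
  then show ?case by (rule definable_pred_cong) simp
next
  case (Suc m)
  have "butlast ` {zs \<in> tuples (Suc (n + m)). P zs} = {xs \<in> tuples (n + m). \<exists>y. P (xs @ [y])}"
  proof (intro equalityI subsetI)
    fix xs assume "xs \<in> butlast ` {zs \<in> tuples (Suc (n + m)). P zs}"
    then obtain zs where zs: "length zs = Suc (n + m)" "P zs" "xs = butlast zs" by auto
    then obtain us u where "zs = us @ [u]" by (metis length_Suc_conv_rev)
    with zs show "xs \<in> {xs \<in> tuples (n + m). \<exists>y. P (xs @ [y])}" by auto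
  next
    fix xs assume "xs \<in> {xs \<in> tuples (n + m). \<exists>y. P (xs @ [y])}"
    then show "xs \<in> butlast ` {zs \<in> tuples (Suc (n + m)). P zs}"
      by (auto intro: image_eqI[where x = "xs @ [_]"])
  qed
  moreover have "butlast ` {zs \<in> tuples (Suc (n + m)). P zs} \<in> D (n + m)"
    using Suc.prems definable_butlast unfolding definable_pred_def by simp
  ultimately have "definable_pred D (n + m) (\<lambda>xs. \<exists>y. P (xs @ [y]))"
    unfolding definable_pred_def by simp
  from Suc.IH[OF this] show ?case
  proof (rule definable_pred_cong)
    fix xs :: "'m list"
    show "(\<exists>ys. length ys = m \<and> (\<exists>y. P ((xs @ ys) @ [y]))) = (\<exists>ys. length ys = Suc m \<and> P (xs @ ys))"
      by (auto simp: length_Suc_conv_rev)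
  qed
qed

lemma definable_pred_take:
  "definable_pred D n P \<Longrightarrow> definable_pred D (n + m) (\<lambda>zs. P (take n zs))"
proof (induction m)
  case 0
  have "definable_pred D n (\<lambda>zs. P (take n zs))" by (rule definable_pred_cong[OF 0]) simp
  then show ?case by simp
next
  case (Suc m)
  have "{xs @ [y] | xs y. xs \<in> {zs \<in> tuples (n + m). P (take n zs)}}
      = {zs \<in> tuples (n + Suc m). P (take n zs)}"
  proof (intro equalityI subsetI)
    fix zs assume zs: "zs \<in> {zs \<in> tuples (n + Suc m). P (take n zs)}"
    then obtain us u where "zs = us @ [u]" "length us = n + m"
      by (auto simp: length_Suc_conv_rev)
    with zs show "zs \<in> {xs @ [y] | xs y. xs \<in> {zs \<in> tuples (n + m). P (take n zs)}}"
      by auto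
  next
    fix zs assume "zs \<in> {xs @ [y] | xs y. xs \<in> {zs \<in> tuples (n + m). P (take n zs)}}"
    then obtain xs y where "zs = xs @ [y]" "length xs = n + m" "P (take n xs)" by blast
    then show "zs \<in> {zs \<in> tuples (n + Suc m). P (take n zs)}" by simp
  qed
  moreover have "{xs @ [y] | xs y. xs \<in> {zs \<in> tuples (n + m). P (take n zs)}} \<in> D (Suc (n + m))"
    using Suc definable_snoc unfolding definable_pred_def by blast
  ultimately show ?case
    unfolding definable_pred_def by simp
qed

lemma definable_pred_drop:
  "definable_pred D n P \<Longrightarrow> definable_pred D (m + n) (\<lambda>zs. P (drop m zs))"
proof (induction m)
  case 0
  then show ?case by simp
next
  case (Suc m)
  have "{y # xs | xs y. xs \<in> {zs \<in> tuples (m + n). P (drop m zs)}}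
      = {zs \<in> tuples (Suc m + n). P (drop (Suc m) zs)}"
  proof (intro equalityI subsetI)
    fix zs assume "zs \<in> {zs \<in> tuples (Suc m + n). P (drop (Suc m) zs)}"
    then show "zs \<in> {y # xs | xs y. xs \<in> {zs \<in> tuples (m + n). P (drop m zs)}}"
      by (cases zs) auto
  qed auto
  moreover have "{y # xs | xs y. xs \<in> {zs \<in> tuples (m + n). P (drop m zs)}} \<in> D (Suc (m + n))"
    using Suc definable_Cons unfolding definable_pred_def by blast
  ultimately show ?case
    unfolding definable_pred_def by simp
qed

lemma definable_pred_nth_eq: "i < n \<Longrightarrow> j < n \<Longrightarrow> definable_pred D n (\<lambda>xs. xs ! i = xs ! j)"
  using definable_diagonal unfolding definable_pred_def by blast

lemma definable_pred_nth_eq_const: "i < n \<Longrightarrow> definable_pred D n (\<lambda>xs. xs ! i = c)"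
proof -
  assume i: "i < n"
  have "definable_pred D 1 (\<lambda>xs. xs \<in> {[c]})"
    by (rule definable_pred_mem[OF definable_singleton])
  then have "definable_pred D 1 (\<lambda>xs. xs ! 0 = c)"
    by (rule definable_pred_cong) (auto simp: length_Suc_conv)
  then have "definable_pred D (i + (1 + (n - i - 1))) (\<lambda>zs. take 1 (drop i zs) ! 0 = c)"
    by (intro definable_pred_drop definable_pred_take)
  moreover have "i + (1 + (n - i - 1)) = n" using i by simp
  ultimately have "definable_pred D n (\<lambda>zs. take 1 (drop i zs) ! 0 = c)" by simp
  then show ?thesis
    by (rule definable_pred_cong) (use i in \<open>simp add: nth_take\<close>)
qed

lemma definable_pred_all_less:
  "(\<And>j. j < (m::nat) \<Longrightarrow> definable_pred D n (Q j)) \<Longrightarrow> definable_pred D n (\<lambda>xs. \<forall>j<m. Q j xs)"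
proof (induction m)
  case 0
  then show ?case using definable_pred_True by simp
next
  case (Suc m)
  have "definable_pred D n (\<lambda>xs. (\<forall>j<m. Q j xs) \<and> Q m xs)"
    using Suc by (intro definable_pred_conj) auto
  then show ?case by (rule definable_pred_cong) (auto simp: less_Suc_eq)
qed

lemma definable_pred_substitute:
  assumes A: "A \<in> D m" and len: "length ts = m" and vars: "\<And>i. Inl i \<in> set ts \<Longrightarrow> i < n"
  shows "definable_pred D n (\<lambda>xs. map (eval_term xs) ts \<in> A)"
proof -
  have eval_append: "eval_term (xs @ ys) t = eval_term xs t" if "length xs = n" "t \<in> set ts" for xs ys t
    using that vars by (cases t) (auto simp: eval_term_def nth_append)
  have "definable_pred D (n + m) (\<lambda>zs. drop n zs \<in> A \<and> (\<forall>j<m. zs ! (n + j) = eval_term zs (ts ! j)))"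
  proof (intro definable_pred_conj definable_pred_all_less)
    show "definable_pred D (n + m) (\<lambda>zs. drop n zs \<in> A)"
      by (rule definable_pred_drop[OF definable_pred_mem[OF A]])
  next
    fix j assume j: "j < m"
    show "definable_pred D (n + m) (\<lambda>zs. zs ! (n + j) = eval_term zs (ts ! j))"
    proof (cases "ts ! j")
      case (Inl i)
      then have "i < n" using vars j len by (metis nth_mem)
      then show ?thesis using Inl j by (simp add: eval_term_def definable_pred_nth_eq)
    next
      case (Inr c)
      then show ?thesis using j by (simp add: eval_term_def definable_pred_nth_eq_const)
    qed
  qed
  from definable_pred_ex[OF this] show ?thesis
  proof (rule definable_pred_cong)
    fix xs :: "'m list" assume xs: "length xs = n"
    have graph: "(length ys = m \<and> (\<forall>j<m. (xs @ ys) ! (n + j) = eval_term (xs @ ys) (ts ! j)))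
          \<longleftrightarrow> ys = map (eval_term xs) ts" for ys
      using xs len eval_append by (auto simp: nth_append intro: nth_equalityI)
    have "(\<exists>ys. length ys = m \<and> drop n (xs @ ys) \<in> A
                 \<and> (\<forall>j<m. (xs @ ys) ! (n + j) = eval_term (xs @ ys) (ts ! j)))
       \<longleftrightarrow> (\<exists>ys. (length ys = m \<and> (\<forall>j<m. (xs @ ys) ! (n + j) = eval_term (xs @ ys) (ts ! j)))
                 \<and> ys \<in> A)"
      using xs by auto
    also have "\<dots> \<longleftrightarrow> map (eval_term xs) ts \<in> A"
      unfolding graph by simp
    finally show "(\<exists>ys. length ys = m \<and> drop n (xs @ ys) \<in> A
                 \<and> (\<forall>j<m. (xs @ ys) ! (n + j) = eval_term (xs @ ys) (ts ! j)))
          = (map (eval_term xs) ts \<in> A)" .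
  qed
qed

lemma definable_section_left:
  assumes "A \<in> D (m + n)" "length c = m"
  shows "{ys \<in> tuples n. c @ ys \<in> A} \<in> D n"
proof -
  have "definable_pred D n (\<lambda>ys. map (eval_term ys) (map Inr c @ map Inl [0..<n]) \<in> A)"
    by (rule definable_pred_substitute) (use assms in auto)
  then have "definable_pred D n (\<lambda>ys. c @ ys \<in> A)"
    by (rule definable_pred_cong) (simp add: map_eval_term_params map_eval_term_vars)
  then show ?thesis unfolding definable_pred_def .
qed

lemma definable_section_right:
  assumes "A \<in> D (n + m)" "length c = m"
  shows "{xs \<in> tuples n. xs @ c \<in> A} \<in> D n"
proof -
  have "definable_pred D n (\<lambda>xs. map (eval_term xs) (map Inl [0..<n] @ map Inr c) \<in> A)"
    by (rule definable_pred_substitute) (use assms in auto)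
  then have "definable_pred D n (\<lambda>xs. xs @ c \<in> A)"
    by (rule definable_pred_cong) (simp add: map_eval_term_params map_eval_term_vars)
  then show ?thesis unfolding definable_pred_def .
qed

lemma definable_product:
  assumes A: "A \<in> D n" and B: "B \<in> D m"
  shows "{a @ b | a b. a \<in> A \<and> b \<in> B} \<in> D (n + m)"
proof -
  have "definable_pred D (n + m) (\<lambda>zs. take n zs \<in> A \<and> drop n zs \<in> B)"
    by (intro definable_pred_conj definable_pred_take definable_pred_drop definable_pred_mem A B)
  moreover have "{zs \<in> tuples (n + m). take n zs \<in> A \<and> drop n zs \<in> B} = {a @ b | a b. a \<in> A \<and> b \<in> B}"
  proof (intro equalityI subsetI)
    fix zs assume "zs \<in> {a @ b | a b. a \<in> A \<and> b \<in> B}"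
    then obtain a b where "zs = a @ b" "a \<in> A" "b \<in> B" by blast
    moreover have "length a = n" "length b = m"
      using \<open>a \<in> A\<close> \<open>b \<in> B\<close> definable_subset_tuples[OF A] definable_subset_tuples[OF B] by auto
    ultimately show "zs \<in> {zs \<in> tuples (n + m). take n zs \<in> A \<and> drop n zs \<in> B}" by simp
  qed (metis (mono_tags, lifting) append_take_drop_id mem_Collect_eq)
  ultimately show ?thesis unfolding definable_pred_def by simp
qed

lemma definable_preimage:
  assumes X: "X \<in> D n" and graph: "{xs @ f xs | xs. xs \<in> X} \<in> D (n + m)"
    and len: "\<And>xs. xs \<in> X \<Longrightarrow> length (f xs) = m" and A: "A \<in> D m"
  shows "{xs \<in> X. f xs \<in> A} \<in> D n"
proof -
  have "definable_pred D (n + m) (\<lambda>zs. zs \<in> {xs @ f xs | xs. xs \<in> X} \<and> drop n zs \<in> A)"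
    by (intro definable_pred_conj definable_pred_mem definable_pred_drop graph A)
  from definable_pred_ex[OF this] have "definable_pred D n (\<lambda>xs. xs \<in> X \<and> f xs \<in> A)"
  proof (rule definable_pred_cong)
    fix xs :: "'m list" assume xs: "length xs = n"
    have "xs @ ys \<in> {xs @ f xs | xs. xs \<in> X} \<longleftrightarrow> xs \<in> X \<and> ys = f xs" for ys
    proof
      assume "xs @ ys \<in> {xs @ f xs | xs. xs \<in> X}"
      then obtain a where "a \<in> X" "xs @ ys = a @ f a" by blast
      moreover have "length a = n" using \<open>a \<in> X\<close> definable_subset_tuples[OF X] by auto
      ultimately show "xs \<in> X \<and> ys = f xs" using xs by auto
    qed blast
    then show "(\<exists>ys. length ys = m \<and> xs @ ys \<in> {xs @ f xs | xs. xs \<in> X} \<and> drop n (xs @ ys) \<in> A)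
        = (xs \<in> X \<and> f xs \<in> A)"
      using xs len by auto
  qed
  moreover have "{xs \<in> tuples n. xs \<in> X \<and> f xs \<in> A} = {xs \<in> X. f xs \<in> A}"
    using definable_subset_tuples[OF X] by blast
  ultimately show ?thesis unfolding definable_pred_def by simp
qed

end

section \<open>Sets determined by finitely many cosets\<close>

definition determined_by :: "'a set \<Rightarrow> 'a set set \<Rightarrow> 'a set \<Rightarrow> bool" where
  "determined_by U S Y \<longleftrightarrow> (\<forall>x\<in>U. \<forall>y\<in>U. (\<forall>C\<in>S. x \<in> C \<longleftrightarrow> y \<in> C) \<longrightarrow> (x \<in> Y \<longleftrightarrow> y \<in> Y))"

lemma boolcomb_determined_by_finite:
  "Y \<in> boolcomb U S \<Longrightarrow> \<exists>S'. finite S' \<and> S' \<subseteq> S \<and> determined_by U S' Y"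
proof (induction rule: boolcomb.induct)
  case (gen A)
  then have "determined_by U {A} A" by (simp add: determined_by_def)
  with gen show ?case by blast
next
  case (compl A)
  then obtain S' where "finite S'" "S' \<subseteq> S" "determined_by U S' A" by blast
  moreover from \<open>determined_by U S' A\<close> have "determined_by U S' (U - A)"
    unfolding determined_by_def by (metis Diff_iff)
  ultimately show ?case by blast
next
  case (union A B)
  then obtain SA SB where SA: "finite SA" "SA \<subseteq> S" "determined_by U SA A"
    and SB: "finite SB" "SB \<subseteq> S" "determined_by U SB B" by blast
  have "determined_by U (SA \<union> SB) (A \<union> B)"
    using SA(3) SB(3) unfolding determined_by_def by (metis Un_iff)
  with SA SB show ?case by (intro exI[of _ "SA \<union> SB"]) simp
qed

lemma determined_by_Diff_empty:
  assumes "determined_by U S Y" shows "determined_by U (S - {{}}) Y"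
  unfolding determined_by_def
proof (intro ballI impI)
  fix x y assume xy: "x \<in> U" "y \<in> U" and agree: "\<forall>C\<in>S - {{}}. x \<in> C \<longleftrightarrow> y \<in> C"
  have "\<forall>C\<in>S. x \<in> C \<longleftrightarrow> y \<in> C"
  proof
    fix C assume "C \<in> S"
    then show "x \<in> C \<longleftrightarrow> y \<in> C" using agree by (cases "C = {}") auto
  qed
  with assms xy show "x \<in> Y \<longleftrightarrow> y \<in> Y" unfolding determined_by_def by blast
qed

lemma l_coset_eq_image: "a <#\<^bsub>G\<^esub> H = (\<lambda>x. a \<otimes>\<^bsub>G\<^esub> x) ` H"
  by (auto simp: l_coset_def)

lemma cosets_in_eq_image: "cosets_in G A X = (\<lambda>a. a <#\<^bsub>G\<^esub> X) ` A"
  by (auto simp: cosets_in_def l_coset_eq_image)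

context group
begin

lemma mem_l_coset_iff:
  assumes "subgroup H G" "a \<in> carrier G" "x \<in> carrier G"
  shows "x \<in> a <# H \<longleftrightarrow> inv a \<otimes> x \<in> H"
  using subgroup.lcos_module_imp[OF assms(1) is_group assms(2)]
    subgroup.lcos_module_rev[OF assms(1) is_group assms(2,3)] by blast

lemma same_l_coset_mem_iff:
  assumes "subgroup H G" "a \<in> carrier G" "x \<in> carrier G" "y \<in> x <# H"
  shows "x \<in> a <# H \<longleftrightarrow> y \<in> a <# H"
  using assms l_repr_independence l_coset_swap l_coset_carrier by metis

lemma finite_l_cosets_of_cover:
  assumes "subgroup K G" "finite A" "A \<subseteq> carrier G" "H \<subseteq> (\<Union>a\<in>A. a <# K)"
  shows "finite ((\<lambda>h. h <# K) ` H)"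
proof (rule finite_subset)
  show "(\<lambda>h. h <# K) ` H \<subseteq> (\<lambda>a. a <# K) ` A"
  proof
    fix X assume "X \<in> (\<lambda>h. h <# K) ` H"
    then obtain h a where X: "X = h <# K" and a: "a \<in> A" "h \<in> a <# K" using assms(4) by blast
    then have "a <# K = h <# K" using l_repr_independence[OF a(2) _ assms(1)] assms(3) by blast
    with X a show "X \<in> (\<lambda>a. a <# K) ` A" by blast
  qed
qed (use assms in simp)

lemma l_coset_representatives:
  assumes "subgroup K G" "H \<subseteq> carrier G" "finite ((\<lambda>h. h <# K) ` H)"
  obtains H0 where "finite H0" "H0 \<subseteq> H" "H \<subseteq> (\<Union>h\<in>H0. h <# K)"
proof -
  obtain H0 where H0: "H0 \<subseteq> H" "finite H0" "(\<lambda>h. h <# K) ` H = (\<lambda>h. h <# K) ` H0"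
    using finite_subset_image[OF assms(3) subset_refl] by blast
  have "H \<subseteq> (\<Union>h\<in>H0. h <# K)"
  proof
    fix x assume "x \<in> H"
    then have "x \<in> x <# K" using assms lcos_self by blast
    moreover obtain h where "h \<in> H0" "x <# K = h <# K" using H0(3) \<open>x \<in> H\<close> by blast
    ultimately show "x \<in> (\<Union>h\<in>H0. h <# K)" by blast
  qed
  with H0 that show ?thesis by blast
qed

lemma finite_l_cosets_trans:
  assumes H: "subgroup H G" and K: "subgroup K G" and K': "subgroup K' G"
    and fin: "finite ((\<lambda>h. h <# K) ` H)"
    and C: "finite C" "C \<subseteq> carrier G" "H \<inter> K \<subseteq> (\<Union>c\<in>C. c <# K')"
  shows "finite ((\<lambda>h. h <# K') ` H)"
proof -
  have Hc: "H \<subseteq> carrier G" using subgroup.subset[OF H] .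
  obtain H0 where H0: "finite H0" "H0 \<subseteq> H" "H \<subseteq> (\<Union>h\<in>H0. h <# K)"
    using l_coset_representatives[OF K Hc fin] by blast
  have cover: "H \<subseteq> (\<Union>a\<in>(\<lambda>(h, c). h \<otimes> c) ` (H0 \<times> C). a <# K')"
  proof
    fix x assume x: "x \<in> H"
    then obtain h where h: "h \<in> H0" "x \<in> h <# K" using H0 by blast
    have hc: "h \<in> carrier G" "x \<in> carrier G" using h x H0 Hc by auto
    have "inv h \<otimes> x \<in> K" using h(2) hc mem_l_coset_iff[OF K] by simp
    moreover have "inv h \<otimes> x \<in> H"
      using h H0 x by (intro subgroup.m_closed[OF H] subgroup.m_inv_closed[OF H]) auto
    ultimately have "inv h \<otimes> x \<in> H \<inter> K" by blast
    then obtain c where c: "c \<in> C" "inv h \<otimes> x \<in> c <# K'" using C by blast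
    have cc: "c \<in> carrier G" using c C by blast
    have "inv (h \<otimes> c) \<otimes> x = inv c \<otimes> (inv h \<otimes> x)"
      using hc cc by (simp add: inv_mult_group m_assoc)
    then have "x \<in> (h \<otimes> c) <# K'"
      using c cc hc mem_l_coset_iff[OF K'] by simp
    then show "x \<in> (\<Union>a\<in>(\<lambda>(h, c). h \<otimes> c) ` (H0 \<times> C). a <# K')" using h c by blast
  qed
  have "(\<lambda>(h, c). h \<otimes> c) ` (H0 \<times> C) \<subseteq> carrier G" using H0 Hc C by (auto intro!: m_closed)
  moreover have "finite ((\<lambda>(h, c). h \<otimes> c) ` (H0 \<times> C))" using H0 C by simp
  ultimately show ?thesis using finite_l_cosets_of_cover[OF K' _ _ cover] by blast
qed

lemma set_mult_subgroup_absorb: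
  assumes "subgroup K G" "subgroup K' G" "K \<subseteq> K'"
  shows "K <#> K' = K'"
proof
  show "K <#> K' \<subseteq> K'"
    using assms subgroup.m_closed[OF assms(2)] unfolding set_mult_def by blast
  show "K' \<subseteq> K <#> K'"
  proof
    fix x assume "x \<in> K'"
    then have "x = \<one> \<otimes> x" using subgroup.mem_carrier[OF assms(2)] by simp
    with \<open>x \<in> K'\<close> subgroup.one_closed[OF assms(1)] show "x \<in> K <#> K'"
      unfolding set_mult_def by blast
  qed
qed

lemma infinite_l_cosets_mono:
  assumes K: "subgroup K G" and K': "subgroup K' G" "K \<subseteq> K'" and A: "A \<subseteq> A'" "A' \<subseteq> carrier G"
    and inf: "infinite ((\<lambda>a. a <# K') ` A)"
  shows "infinite ((\<lambda>a. a <# K) ` A')"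
proof
  assume fin: "finite ((\<lambda>a. a <# K) ` A')"
  have "(\<lambda>a. a <# K') ` A \<subseteq> (\<lambda>X. X <#> K') ` (\<lambda>a. a <# K) ` A'"
  proof
    fix X assume "X \<in> (\<lambda>a. a <# K') ` A"
    then obtain a where a: "a \<in> A" "X = a <# K'" by blast
    then have "X = (a <# K) <#> K'"
      using A K K' subgroup.subset setmult_lcos_assoc set_mult_subgroup_absorb by (metis subsetD)
    with a A show "X \<in> (\<lambda>X. X <#> K') ` (\<lambda>a. a <# K) ` A'" by blast
  qed
  with fin inf show False using finite_surj by blast
qed

lemma set_mult_eq_UN_l_cosets:
  assumes K: "subgroup K G" and H: "H \<subseteq> carrier G" "H0 \<subseteq> H" "H \<subseteq> (\<Union>h\<in>H0. h <# K)"
  shows "H <#> K = (\<Union>h\<in>H0. h <# K)"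
proof
  show "H <#> K \<subseteq> (\<Union>h\<in>H0. h <# K)"
  proof
    fix z assume "z \<in> H <#> K"
    then obtain h where h: "h \<in> H" "z \<in> h <# K" unfolding set_mult_def l_coset_def by blast
    then obtain h0 where h0: "h0 \<in> H0" "h \<in> h0 <# K" using H(3) by blast
    then have "h0 <# K = h <# K" using l_repr_independence[OF h0(2) _ K] H by blast
    with h h0 show "z \<in> (\<Union>h\<in>H0. h <# K)" by blast
  qed
  show "(\<Union>h\<in>H0. h <# K) \<subseteq> H <#> K"
    using H(2) unfolding set_mult_def l_coset_def by blast
qed

end

section \<open>Chains of subgroups of infinite index\<close>

locale subgroup_chain = comm_group G for G (structure) +
  fixes Bs :: "'a set set"
  assumes chain_subgroup: "\<beta> \<in> Bs \<Longrightarrow> subgroup \<beta> G"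
    and chain_total: "\<beta> \<in> Bs \<Longrightarrow> \<gamma> \<in> Bs \<Longrightarrow> \<beta> \<subseteq> \<gamma> \<or> \<gamma> \<subseteq> \<beta>"
    and chain_infinite_index: "\<beta> \<in> Bs \<Longrightarrow> \<gamma> \<in> Bs \<Longrightarrow> \<beta> \<subset> \<gamma> \<Longrightarrow> infinite ((\<lambda>a. a <# \<beta>) ` \<gamma>)"
    and chain_trivial: "{\<one>} \<in> Bs"
    and chain_carrier: "carrier G \<in> Bs"
begin

lemma exists_outside_finite_cosets:
  assumes "\<beta>' \<in> Bs" "\<beta> \<in> Bs" "\<beta>' \<subset> \<beta>" "finite A" "A \<subseteq> carrier G"
  shows "\<exists>y\<in>\<beta>. y \<notin> (\<Union>a\<in>A. a <# \<beta>')"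
proof (rule ccontr)
  assume "\<not> ?thesis"
  then have "\<beta> \<subseteq> (\<Union>a\<in>A. a <# \<beta>')" by blast
  then have "finite ((\<lambda>a. a <# \<beta>') ` \<beta>)"
    by (rule finite_l_cosets_of_cover[OF chain_subgroup[OF assms(1)] assms(4,5)])
  with chain_infinite_index[OF assms(1-3)] show False by contradiction
qed

text \<open>Choose \<open>y\<close> outside the cosets \<open>c <# \<beta>'\<close> and also outside their translates
  \<open>(g \<otimes> inv c) <# \<beta>'\<close>; then neither \<open>y\<close> nor \<open>g \<otimes> inv y\<close> lies in a coset \<open>c <# \<beta>'\<close>.\<close>

lemma product_outside_finite_cosets:
  assumes "\<beta>' \<in> Bs" "\<beta> \<in> Bs" "\<beta>' \<subset> \<beta>" "finite C" "C \<subseteq> carrier G" "g \<in> \<beta>"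
  defines "E \<equiv> \<Union>c\<in>C. c <# \<beta>'"
  shows "\<exists>y1\<in>\<beta> - E. \<exists>y2\<in>\<beta> - E. g = y1 \<otimes> y2"
proof -
  have b: "subgroup \<beta> G" and b': "subgroup \<beta>' G" using assms chain_subgroup by auto
  have gc: "g \<in> carrier G" using assms subgroup.mem_carrier[OF b] by blast
  obtain y where y: "y \<in> \<beta>" "y \<notin> (\<Union>a\<in>C \<union> (\<lambda>c. g \<otimes> inv c) ` C. a <# \<beta>')"
    using exists_outside_finite_cosets[of \<beta>' \<beta> "C \<union> (\<lambda>c. g \<otimes> inv c) ` C"] assms gc by auto
  have yc: "y \<in> carrier G" using y subgroup.mem_carrier[OF b] by blast
  have "g \<otimes> inv y \<notin> E"
  proof
    assume "g \<otimes> inv y \<in> E"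
    then obtain c where c: "c \<in> C" "g \<otimes> inv y \<in> c <# \<beta>'" unfolding E_def by blast
    have cc: "c \<in> carrier G" using c assms by blast
    have "inv (inv c \<otimes> (g \<otimes> inv y)) \<in> \<beta>'"
      using c cc gc yc mem_l_coset_iff[OF b'] subgroup.m_inv_closed[OF b'] by simp
    moreover have "inv (inv c \<otimes> (g \<otimes> inv y)) = inv (g \<otimes> inv c) \<otimes> y"
      using cc gc yc by (simp add: inv_mult m_ac)
    ultimately have "y \<in> (g \<otimes> inv c) <# \<beta>'" using cc gc yc mem_l_coset_iff[OF b'] by simp
    with y c show False by blast
  qed
  moreover have "g \<otimes> inv y \<in> \<beta>"
    using assms y subgroup.m_closed[OF b] subgroup.m_inv_closed[OF b] by blast
  moreover have "g = (g \<otimes> inv y) \<otimes> y" using gc yc by (simp add: m_assoc)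
  ultimately show ?thesis using y unfolding E_def by blast
qed

text \<open>A coset \<open>a <# \<gamma>\<close> from \<open>P\<close> with \<open>\<beta> \<subseteq> \<gamma>\<close> contains either all of \<open>\<beta>\<close> or none of it;
  one with \<open>\<gamma> \<subseteq> \<beta>'\<close> lies inside the excluded cosets.\<close>

lemma determined_constant_in_gap:
  assumes P: "P \<subseteq> carrier G \<times> Bs" and det: "determined_by (carrier G) ((\<lambda>(a, \<gamma>). a <# \<gamma>) ` P) Y"
    and \<beta>: "subgroup \<beta> G"
    and gap: "\<And>a \<gamma>. (a, \<gamma>) \<in> P \<Longrightarrow> \<gamma> \<subseteq> \<beta>' \<or> \<beta> \<subseteq> \<gamma>"
    and C: "\<And>a \<gamma>. (a, \<gamma>) \<in> P \<Longrightarrow> \<gamma> \<subseteq> \<beta>' \<Longrightarrow> a \<in> C"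
    and x: "x \<in> \<beta> - (\<Union>c\<in>C. c <# \<beta>')" and y: "y \<in> \<beta> - (\<Union>c\<in>C. c <# \<beta>')"
  shows "x \<in> Y \<longleftrightarrow> y \<in> Y"
proof -
  have xc: "x \<in> carrier G" and yc: "y \<in> carrier G"
    using x y subgroup.mem_carrier[OF \<beta>] by auto
  have "x \<in> a <# \<gamma> \<longleftrightarrow> y \<in> a <# \<gamma>" if p: "(a, \<gamma>) \<in> P" for a \<gamma>
  proof -
    have ac: "a \<in> carrier G" and \<gamma>: "subgroup \<gamma> G" using p P chain_subgroup by auto
    from gap[OF p] show ?thesis
    proof
      assume "\<gamma> \<subseteq> \<beta>'"
      then have "a <# \<gamma> \<subseteq> (\<Union>c\<in>C. c <# \<beta>')" using C[OF p] by (auto simp: l_coset_def)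
      then show ?thesis using x y by blast
    next
      assume "\<beta> \<subseteq> \<gamma>"
      then have "inv x \<otimes> y \<in> \<gamma>"
        using x y subgroup.m_closed[OF \<beta>] subgroup.m_inv_closed[OF \<beta>] by blast
      then have "y \<in> x <# \<gamma>" using subgroup.lcos_module_rev[OF \<gamma> is_group xc yc] by simp
      then show ?thesis by (rule same_l_coset_mem_iff[OF \<gamma> ac xc])
    qed
  qed
  then show ?thesis using det xc yc unfolding determined_by_def by blast
qed

lemma chain_subset_chain: "B \<subseteq> Bs \<Longrightarrow> subset.chain Bs B"
  using chain_total by (auto simp: subset_chain_def)

text \<open>Take the smallest subgroup \<open>\<beta>\<close> (among those occurring in \<open>P\<close>)
  such that \<open>H\<close> meets only finitely many cosets of \<open>\<beta>\<close>, and the next smaller one \<open>\<beta>'\<close>. By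
  minimality, \<open>H \<inter> \<beta>\<close> is not covered by the finitely many \<open>\<beta>'\<close>-cosets relevant to \<open>P\<close>, so
  the complement of these cosets in \<open>\<beta>\<close>, on which \<open>Y\<close> is constant, lies in \<open>Y\<close>.\<close>

theorem subgroup_in_determined_set:
  assumes H: "subgroup H G" and P: "finite P" "P \<subseteq> carrier G \<times> Bs"
    and det: "determined_by (carrier G) ((\<lambda>(a, \<gamma>). a <# \<gamma>) ` P) Y" and HY: "H \<subseteq> Y"
  shows "\<exists>\<beta>\<in>Bs. finite ((\<lambda>h. h <# \<beta>) ` H) \<and> \<beta> \<subseteq> Y <#> Y"
proof -
  have Hc: "H \<subseteq> carrier G" using subgroup.subset[OF H] .
  define Bf where "Bf = snd ` P \<union> {{\<one>}, carrier G}"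
  have Bf: "finite Bf" "Bf \<subseteq> Bs" using P chain_trivial chain_carrier by (auto simp: Bf_def)
  define Cov where "Cov = {\<gamma> \<in> Bf. finite ((\<lambda>h. h <# \<gamma>) ` H)}"
  have "H \<subseteq> (\<Union>a\<in>{\<one>}. a <# carrier G)" using Hc lcos_mult_one by simp
  then have "finite ((\<lambda>h. h <# carrier G) ` H)"
    using finite_l_cosets_of_cover[OF subgroup_self] by blast
  then have "carrier G \<in> Cov" by (simp add: Cov_def Bf_def)
  moreover have "subset.chain Bs Cov" using Bf by (intro chain_subset_chain) (auto simp: Cov_def)
  ultimately have "\<Inter>Cov \<in> Cov" using Bf by (intro Inter_in_chain) (auto simp: Cov_def)
  then obtain \<beta> where \<beta>: "\<beta> \<in> Bf" "finite ((\<lambda>h. h <# \<beta>) ` H)"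
    and \<beta>_least: "\<And>\<gamma>. \<gamma> \<in> Cov \<Longrightarrow> \<beta> \<subseteq> \<gamma>" by (auto simp: Cov_def)
  have \<beta>_sub: "subgroup \<beta> G" using \<beta> Bf chain_subgroup by blast
  have "\<beta> \<subseteq> Y <#> Y"
  proof (cases "\<beta> = {\<one>}")
    case True
    have "\<one> \<in> Y" using HY subgroup.one_closed[OF H] by blast
    then have "\<one> \<otimes> \<one> \<in> Y <#> Y" unfolding set_mult_def by blast
    with True show ?thesis by simp
  next
    case False
    define L where "L = {\<gamma> \<in> Bf. \<gamma> \<subset> \<beta>}"
    have "{\<one>} \<in> L" using False subgroup.one_closed[OF \<beta>_sub] by (auto simp: L_def Bf_def)
    moreover have "subset.chain Bs L" using Bf by (intro chain_subset_chain) (auto simp: L_def)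
    ultimately have "\<Union>L \<in> L" using Bf by (intro Union_in_chain) (auto simp: L_def)
    then obtain \<beta>' where \<beta>': "\<beta>' \<in> Bf" "\<beta>' \<subset> \<beta>" and \<beta>'_greatest: "\<And>\<gamma>. \<gamma> \<in> L \<Longrightarrow> \<gamma> \<subseteq> \<beta>'"
      by (auto simp: L_def)
    define C where "C = fst ` {p \<in> P. snd p \<subseteq> \<beta>'}"
    have C: "finite C" "C \<subseteq> carrier G" using P by (auto simp: C_def)
    have gap: "\<gamma> \<subseteq> \<beta>' \<or> \<beta> \<subseteq> \<gamma>" if "(a, \<gamma>) \<in> P" for a \<gamma>
    proof -
      have "\<gamma> \<in> Bf" using that by (force simp: Bf_def)
      then show ?thesis
        using \<beta>'_greatest[of \<gamma>] chain_total[of \<gamma> \<beta>] \<beta> Bf by (auto simp: L_def)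
    qed
    have "\<not> H \<inter> \<beta> \<subseteq> (\<Union>c\<in>C. c <# \<beta>')"
    proof
      assume "H \<inter> \<beta> \<subseteq> (\<Union>c\<in>C. c <# \<beta>')"
      then have "finite ((\<lambda>h. h <# \<beta>') ` H)"
        using finite_l_cosets_trans[OF H \<beta>_sub chain_subgroup \<beta>(2) C] \<beta>' Bf by blast
      then have "\<beta> \<subseteq> \<beta>'" using \<beta>_least \<beta>' by (simp add: Cov_def)
      with \<beta>' show False by blast
    qed
    then obtain h where h: "h \<in> H" "h \<in> \<beta> - (\<Union>c\<in>C. c <# \<beta>')" by blast
    have in_Y: "z \<in> Y" if "z \<in> \<beta> - (\<Union>c\<in>C. c <# \<beta>')" for z
      using determined_constant_in_gap[OF P(2) det \<beta>_sub gap _ that h(2)] h(1) HY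
      by (force simp: C_def)
    show ?thesis
    proof
      fix g assume "g \<in> \<beta>"
      then obtain y1 y2 where "y1 \<in> \<beta> - (\<Union>c\<in>C. c <# \<beta>')" "y2 \<in> \<beta> - (\<Union>c\<in>C. c <# \<beta>')" "g = y1 \<otimes> y2"
        using product_outside_finite_cosets[OF _ _ \<beta>'(2) C] \<beta> \<beta>' Bf by blast
      then show "g \<in> Y <#> Y" using in_Y unfolding set_mult_def by blast
    qed
  qed
  with \<beta> Bf show ?thesis by blast
qed

end

section \<open>Valued groups and their balls\<close>

locale valued_group = comm_group G for G (structure) +
  fixes I :: "'b set" and le :: "'b \<Rightarrow> 'b \<Rightarrow> bool" and v :: "'a \<Rightarrow> 'b"
  assumes le_refl: "r \<in> I \<Longrightarrow> le r r"
    and le_antisym: "r \<in> I \<Longrightarrow> s \<in> I \<Longrightarrow> le r s \<Longrightarrow> le s r \<Longrightarrow> r = s"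
    and le_trans: "r \<in> I \<Longrightarrow> s \<in> I \<Longrightarrow> t \<in> I \<Longrightarrow> le r s \<Longrightarrow> le s t \<Longrightarrow> le r t"
    and le_total: "r \<in> I \<Longrightarrow> s \<in> I \<Longrightarrow> le r s \<or> le s r"
    and v_in: "a \<in> carrier G \<Longrightarrow> v a \<in> I"
    and v_mult: "a \<in> carrier G \<Longrightarrow> b \<in> carrier G \<Longrightarrow> le (v a) (v (a \<otimes> b)) \<or> le (v b) (v (a \<otimes> b))"
    and v_inv: "a \<in> carrier G \<Longrightarrow> v (inv a) = v a"
    and v_one_greatest: "r \<in> I \<Longrightarrow> le r (v \<one>)"
    and v_eq_one: "a \<in> carrier G \<Longrightarrow> v a = v \<one> \<Longrightarrow> a = \<one>"
begin

definition upper_set :: "'b set \<Rightarrow> bool" where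
  "upper_set S \<longleftrightarrow> S \<subseteq> I \<and> (\<forall>s\<in>S. \<forall>t\<in>I. le s t \<longrightarrow> t \<in> S)"

definition v_preimage :: "'b set \<Rightarrow> 'a set" where
  "v_preimage S = {a \<in> carrier G. v a \<in> S}"

definition closed_ball :: "'b \<Rightarrow> 'a set" where
  "closed_ball r = {a \<in> carrier G. le r (v a)}"

definition open_ball :: "'b \<Rightarrow> 'a set" where
  "open_ball r = {a \<in> carrier G. le r (v a) \<and> r \<noteq> v a}"

definition balls :: "'a set set" where
  "balls = closed_ball ` I \<union> open_ball ` (I - {v \<one>}) \<union> {carrier G}"

lemma upper_sets_nested: "upper_set S \<Longrightarrow> upper_set T \<Longrightarrow> S \<subseteq> T \<or> T \<subseteq> S"
  unfolding upper_set_def using le_total by blast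

lemma subgroup_v_preimage:
  assumes S: "upper_set S" "S \<noteq> {}"
  shows "subgroup (v_preimage S) G"
proof -
  have up: "t \<in> S" if "s \<in> S" "le s t" "t \<in> I" for s t
    using S(1) that unfolding upper_set_def by blast
  show ?thesis
  proof (rule subgroupI)
    obtain s where "s \<in> S" using S(2) by blast
    moreover have "s \<in> I" using calculation S(1) unfolding upper_set_def by blast
    ultimately have "v \<one> \<in> S" using up v_one_greatest v_in[OF one_closed] by blast
    then show "v_preimage S \<noteq> {}" by (auto simp: v_preimage_def)
  next
    fix a b assume a: "a \<in> v_preimage S" and b: "b \<in> v_preimage S"
    then have ab: "a \<otimes> b \<in> carrier G" by (simp add: v_preimage_def)
    from a b have "le (v a) (v (a \<otimes> b)) \<or> le (v b) (v (a \<otimes> b))"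
      by (intro v_mult) (simp_all add: v_preimage_def)
    then have "v (a \<otimes> b) \<in> S"
      using a b up v_in[OF ab] unfolding v_preimage_def by blast
    with ab show "a \<otimes> b \<in> v_preimage S" by (simp add: v_preimage_def)
  next
    fix a assume "a \<in> v_preimage S"
    then show "inv a \<in> v_preimage S" by (simp add: v_preimage_def v_inv)
  qed (simp add: v_preimage_def)
qed

lemma closed_ball_eq: "closed_ball r = v_preimage {s \<in> I. le r s}"
  by (auto simp: closed_ball_def v_preimage_def v_in)

lemma open_ball_eq: "open_ball r = v_preimage {s \<in> I. le r s \<and> r \<noteq> s}"
  by (auto simp: open_ball_def v_preimage_def v_in)

lemma upper_set_closed_ray: "r \<in> I \<Longrightarrow> upper_set {s \<in> I. le r s}"
  unfolding upper_set_def using le_trans by blast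

lemma upper_set_open_ray: "r \<in> I \<Longrightarrow> upper_set {s \<in> I. le r s \<and> r \<noteq> s}"
  unfolding upper_set_def using le_trans le_antisym by blast

lemma balls_cases:
  assumes "\<beta> \<in> balls"
  obtains (closed_ball) r where "r \<in> I" "\<beta> = closed_ball r"
    | (open_ball) r where "r \<in> I" "r \<noteq> v \<one>" "\<beta> = open_ball r"
    | (carrier) "\<beta> = carrier G"
  using assms unfolding balls_def by blast

lemma balls_v_preimage:
  assumes "\<beta> \<in> balls"
  obtains S where "upper_set S" "S \<noteq> {}" "\<beta> = v_preimage S"
  using assms
proof (cases rule: balls_cases)
  case (closed_ball r)
  then have "v \<one> \<in> {s \<in> I. le r s}" using v_one_greatest v_in by simp
  then show ?thesis using that closed_ball upper_set_closed_ray closed_ball_eq by blast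
next
  case (open_ball r)
  then have "v \<one> \<in> {s \<in> I. le r s \<and> r \<noteq> s}" using v_one_greatest v_in by simp
  then show ?thesis using that open_ball upper_set_open_ray open_ball_eq by blast
next
  case carrier
  moreover have "carrier G = v_preimage I" by (auto simp: v_preimage_def v_in)
  moreover have "upper_set I" by (simp add: upper_set_def)
  ultimately show ?thesis using that v_in one_closed by blast
qed

lemma closed_ball_v_one: "closed_ball (v \<one>) = {\<one>}"
  using v_one_greatest v_in le_antisym v_eq_one le_refl by (fastforce simp: closed_ball_def)

lemma open_ball_v_one: "open_ball (v \<one>) = {}"
  using v_one_greatest v_in le_antisym by (fastforce simp: open_ball_def)

text \<open>The radius \<open>r\<close> is the value of any element of \<open>v_preimage T\<close> outside \<open>v_preimage S\<close>.\<close>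

lemma ball_gap_between:
  assumes S: "upper_set S" "S \<noteq> {}" and T: "upper_set T" and ST: "v_preimage S \<subset> v_preimage T"
  obtains r where "r \<in> I" "r \<noteq> v \<one>" "closed_ball r \<subseteq> v_preimage T" "v_preimage S \<subseteq> open_ball r"
proof -
  obtain g where g: "g \<in> carrier G" "v g \<in> T" "v g \<notin> S"
    using ST by (auto simp: v_preimage_def)
  have "\<one> \<in> v_preimage S" using subgroup.one_closed[OF subgroup_v_preimage[OF S]] .
  then have "v g \<noteq> v \<one>" using g by (auto simp: v_preimage_def)
  moreover have "closed_ball (v g) \<subseteq> v_preimage T"
    using T g v_in unfolding upper_set_def closed_ball_def v_preimage_def by blast
  moreover have "v_preimage S \<subseteq> open_ball (v g)"
  proof
    fix a assume a: "a \<in> v_preimage S"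
    then have "\<not> le (v a) (v g)"
      using S(1) g v_in unfolding upper_set_def v_preimage_def by blast
    then show "a \<in> open_ball (v g)"
      using a g le_total[of "v a" "v g"] le_refl[of "v g"] v_in unfolding v_preimage_def open_ball_def by auto
  qed
  ultimately show ?thesis using that g v_in by blast
qed

lemma subgroup_chain_balls:
  assumes "\<And>r. r \<in> I \<Longrightarrow> r \<noteq> v \<one> \<Longrightarrow> infinite ((\<lambda>a. a <# open_ball r) ` closed_ball r)"
  shows "subgroup_chain G balls"
proof (intro subgroup_chain.intro comm_group_axioms subgroup_chain_axioms.intro)
  fix \<beta> assume "\<beta> \<in> balls"
  then show "subgroup \<beta> G" by (metis balls_v_preimage subgroup_v_preimage)
next
  fix \<beta> \<gamma> assume "\<beta> \<in> balls" "\<gamma> \<in> balls"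
  then obtain S T where "upper_set S" "\<beta> = v_preimage S" "upper_set T" "\<gamma> = v_preimage T"
    by (metis balls_v_preimage)
  then show "\<beta> \<subseteq> \<gamma> \<or> \<gamma> \<subseteq> \<beta>"
    using upper_sets_nested[of S T] by (auto simp: v_preimage_def)
next
  fix \<beta> \<gamma> assume "\<beta> \<in> balls" "\<gamma> \<in> balls" "\<beta> \<subset> \<gamma>"
  then obtain S T where S: "upper_set S" "S \<noteq> {}" "\<beta> = v_preimage S"
    and T: "upper_set T" "\<gamma> = v_preimage T"
    by (metis balls_v_preimage)
  with \<open>\<beta> \<subset> \<gamma>\<close> have "v_preimage S \<subset> v_preimage T" by simp
  from ball_gap_between[OF S(1,2) T(1) this] obtain r
    where r: "r \<in> I" "r \<noteq> v \<one>" "closed_ball r \<subseteq> \<gamma>" "\<beta> \<subseteq> open_ball r"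
    unfolding S(3)[symmetric] T(2)[symmetric] .
  have "v \<one> \<in> {s \<in> I. le r s \<and> r \<noteq> s}" using r v_one_greatest v_in by simp
  then have "subgroup (open_ball r) G"
    unfolding open_ball_eq using r(1) by (intro subgroup_v_preimage upper_set_open_ray) auto
  moreover have "subgroup \<beta> G" using S subgroup_v_preimage by simp
  moreover have "\<gamma> \<subseteq> carrier G" using T by (simp add: v_preimage_def)
  ultimately show "infinite ((\<lambda>a. a <# \<beta>) ` \<gamma>)"
    using infinite_l_cosets_mono[OF _ _ r(4) r(3)] assms[OF r(1,2)] by blast
next
  show "{\<one>} \<in> balls" using closed_ball_v_one v_in[OF one_closed] by (auto simp: balls_def)
  show "carrier G \<in> balls" by (simp add: balls_def)
qed

end

section \<open>Definable valued groups\<close>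

lemma lesspoll_insert_image: "infinite K \<Longrightarrow> F \<prec> K \<Longrightarrow> insert R (f ` F) \<prec> K"
proof (cases "finite (f ` F)")
  case True
  then show "infinite K \<Longrightarrow> ?thesis" by (simp add: finite_lesspoll_infinite)
next
  case False
  assume "F \<prec> K"
  have "insert R (f ` F) \<approx> f ` F" using infinite_insert_eqpoll[OF False] .
  also have "f ` F \<lesssim> F" by (rule image_lepoll)
  finally show ?thesis using \<open>F \<prec> K\<close> by (rule lesspoll_trans1)
qed

locale definable_valued_group =
  valued_group G I le v + definable_structure D
  for G :: "'m list monoid" (structure) and I :: "'m list set"
    and le :: "'m list \<Rightarrow> 'm list \<Rightarrow> bool" and v :: "'m list \<Rightarrow> 'm list"
    and D :: "nat \<Rightarrow> 'm list set set" +
  fixes K :: "'k set" and k l :: nat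
  assumes saturated: "saturated D K" and uncountable: "\<not> K \<lesssim> (UNIV :: nat set)"
    and carrier_definable: "carrier G \<in> D k"
    and mult_definable: "{xs @ ys @ (xs \<otimes> ys) | xs ys. xs \<in> carrier G \<and> ys \<in> carrier G} \<in> D (3 * k)"
    and I_definable: "I \<in> D l"
    and le_definable: "{xs @ ys | xs ys. xs \<in> I \<and> ys \<in> I \<and> le xs ys} \<in> D (2 * l)"
    and v_definable: "{xs @ v xs | xs. xs \<in> carrier G} \<in> D (k + l)"
    and boolean_combination: "X \<in> D k \<Longrightarrow> X \<subseteq> carrier G \<Longrightarrow> X \<in> boolcomb (carrier G)
        {a <# Y | a Y. a \<in> carrier G \<and>
          (Y \<in> closed_ball ` I \<or> Y \<in> open_ball ` I \<or> Y = {\<one>} \<or> Y = carrier G)}"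
    and infinite_gaps: "r \<in> I \<Longrightarrow> r \<noteq> v \<one> \<Longrightarrow> infinite ((\<lambda>a. a <# open_ball r) ` closed_ball r)"
begin

sublocale subgroup_chain G balls
  using infinite_gaps by (rule subgroup_chain_balls)

lemma carrier_tuples: "carrier G \<subseteq> tuples k"
  by (rule definable_subset_tuples[OF carrier_definable])

lemma I_tuples: "I \<subseteq> tuples l"
  by (rule definable_subset_tuples[OF I_definable])

lemma v_preimage_definable: "S \<in> D l \<Longrightarrow> v_preimage S \<in> D k"
  unfolding v_preimage_def
  using v_in I_tuples by (intro definable_preimage[OF carrier_definable v_definable]) auto

lemma le_graph_definable: "{xs @ ys | xs ys. xs \<in> I \<and> ys \<in> I \<and> le xs ys} \<in> D (l + l)"
  using le_definable by (simp add: mult_2)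

lemma le_mem_iff: "r \<in> tuples l \<Longrightarrow> r @ s \<in> {xs @ ys | xs ys. xs \<in> I \<and> ys \<in> I \<and> le xs ys}
    \<longleftrightarrow> r \<in> I \<and> s \<in> I \<and> le r s"
  using I_tuples by (intro append_mem_concat_iff) auto

lemma upper_ray_definable: "r \<in> I \<Longrightarrow> {s \<in> I. le r s} \<in> D l"
proof -
  assume r: "r \<in> I"
  then have "{s \<in> tuples l. r @ s \<in> {xs @ ys | xs ys. xs \<in> I \<and> ys \<in> I \<and> le xs ys}} \<in> D l"
    using r I_tuples by (intro definable_section_left[OF le_graph_definable]) auto
  moreover have "{s \<in> tuples l. r @ s \<in> {xs @ ys | xs ys. xs \<in> I \<and> ys \<in> I \<and> le xs ys}}
      = {s \<in> I. le r s}"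
    using r I_tuples le_mem_iff by auto
  ultimately show ?thesis by simp
qed

lemma lower_ray_definable: "r \<in> I \<Longrightarrow> {s \<in> I. le s r} \<in> D l"
proof -
  assume r: "r \<in> I"
  then have "{s \<in> tuples l. s @ r \<in> {xs @ ys | xs ys. xs \<in> I \<and> ys \<in> I \<and> le xs ys}} \<in> D l"
    using r I_tuples by (intro definable_section_right[OF le_graph_definable]) auto
  moreover have "{s \<in> tuples l. s @ r \<in> {xs @ ys | xs ys. xs \<in> I \<and> ys \<in> I \<and> le xs ys}}
      = {s \<in> I. le s r}"
    using r I_tuples le_mem_iff by auto
  ultimately show ?thesis by simp
qed

lemma closed_ball_definable: "r \<in> I \<Longrightarrow> closed_ball r \<in> D k"
  unfolding closed_ball_eq by (intro v_preimage_definable upper_ray_definable)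

lemma open_ball_definable: "r \<in> I \<Longrightarrow> open_ball r \<in> D k"
proof -
  assume r: "r \<in> I"
  have "{s \<in> I. le r s \<and> r \<noteq> s} = {s \<in> I. le r s} \<inter> (tuples l - {s \<in> I. le s r})"
    using r I_tuples le_antisym by auto
  then show ?thesis
    unfolding open_ball_eq using r
    by (simp add: v_preimage_definable definable_Int definable_Diff_tuples upper_ray_definable
        lower_ray_definable)
qed

lemma balls_definable: "\<beta> \<in> balls \<Longrightarrow> \<beta> \<in> D k"
  by (auto elim!: balls_cases simp: closed_ball_definable open_ball_definable carrier_definable)

lemma mult_graph_mem_iff:
  assumes "length a = k" "length b = k"
  shows "a @ b @ z \<in> {xs @ ys @ (xs \<otimes> ys) | xs ys. xs \<in> carrier G \<and> ys \<in> carrier G}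
    \<longleftrightarrow> a \<in> carrier G \<and> b \<in> carrier G \<and> z = a \<otimes> b"
proof
  assume "a @ b @ z \<in> {xs @ ys @ (xs \<otimes> ys) | xs ys. xs \<in> carrier G \<and> ys \<in> carrier G}"
  then obtain x y where xy: "x \<in> carrier G" "y \<in> carrier G" "a @ b @ z = x @ y @ (x \<otimes> y)" by blast
  moreover have "length x = k" "length y = k" using xy carrier_tuples by auto
  ultimately show "a \<in> carrier G \<and> b \<in> carrier G \<and> z = a \<otimes> b" using assms by simp
qed blast

lemma l_coset_definable:
  assumes A: "A \<in> D k" "A \<subseteq> carrier G" and c: "c \<in> carrier G"
  shows "c <# A \<in> D k"
proof -
  let ?M = "{xs @ ys @ (xs \<otimes> ys) | xs ys. xs \<in> carrier G \<and> ys \<in> carrier G}"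
  have ic: "inv c \<in> carrier G" "length (inv c) = k" using c carrier_tuples by auto
  have "{w \<in> tuples (k + k). inv c @ w \<in> ?M} \<in> D (k + k)"
    using mult_definable ic by (intro definable_section_left) (simp_all add: numeral_3_eq_3)
  moreover have "{w \<in> tuples (k + k). inv c @ w \<in> ?M} = {x @ (inv c \<otimes> x) | x. x \<in> carrier G}"
  proof (intro equalityI subsetI)
    fix w assume w: "w \<in> {w \<in> tuples (k + k). inv c @ w \<in> ?M}"
    then have "w = take k w @ drop k w" "length (take k w) = k" by simp_all
    with w ic show "w \<in> {x @ (inv c \<otimes> x) | x. x \<in> carrier G}"
      using mult_graph_mem_iff by (metis (mono_tags, lifting) mem_Collect_eq)
  next
    fix w assume "w \<in> {x @ (inv c \<otimes> x) | x. x \<in> carrier G}"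
    then obtain x where x: "x \<in> carrier G" "w = x @ (inv c \<otimes> x)" by blast
    then have "length x = k" "length (inv c \<otimes> x) = k" using ic carrier_tuples by auto
    with x ic show "w \<in> {w \<in> tuples (k + k). inv c @ w \<in> ?M}"
      by auto
  qed
  moreover have "length (inv c \<otimes> x) = k" if "x \<in> carrier G" for x
    using that ic carrier_tuples by auto
  ultimately have "{x \<in> carrier G. inv c \<otimes> x \<in> A} \<in> D k"
    by (intro definable_preimage[OF carrier_definable _ _ A(1)]) auto
  moreover have "{x \<in> carrier G. inv c \<otimes> x \<in> A} = c <# A"
    using A(2) c by (auto simp: l_coset_def m_assoc[symmetric])
  ultimately show ?thesis by simp
qed

lemma definable_determined_by_balls:
  assumes "X \<in> D k" "X \<subseteq> carrier G"
  obtains P where "finite P" "P \<subseteq> carrier G \<times> balls"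
    "determined_by (carrier G) ((\<lambda>(a, \<beta>). a <# \<beta>) ` P) X"
proof -
  let ?Gen = "{a <# Y | a Y. a \<in> carrier G \<and>
    (Y \<in> closed_ball ` I \<or> Y \<in> open_ball ` I \<or> Y = {\<one>} \<or> Y = carrier G)}"
  from boolcomb_determined_by_finite[OF boolean_combination[OF assms]]
  obtain S where S: "finite S" "S \<subseteq> ?Gen" "determined_by (carrier G) S X"
    by (elim exE conjE) (rule that)
  have "?Gen - {{}} \<subseteq> (\<lambda>(a, \<beta>). a <# \<beta>) ` (carrier G \<times> balls)"
  proof
    fix C assume "C \<in> ?Gen - {{}}"
    then obtain a Y where C: "C = a <# Y" "C \<noteq> {}" "a \<in> carrier G"
      and Y: "Y \<in> closed_ball ` I \<or> Y \<in> open_ball ` I \<or> Y = {\<one>} \<or> Y = carrier G" by blast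
    have "Y \<in> balls"
    proof -
      have "Y \<noteq> open_ball (v \<one>)" using C open_ball_v_one by (auto simp: l_coset_def)
      then show ?thesis
        using Y closed_ball_v_one v_in[OF one_closed] by (auto simp: balls_def)
    qed
    with C show "C \<in> (\<lambda>(a, \<beta>). a <# \<beta>) ` (carrier G \<times> balls)" by blast
  qed
  with S(2) have "S - {{}} \<subseteq> (\<lambda>(a, \<beta>). a <# \<beta>) ` (carrier G \<times> balls)"
    by (meson Diff_mono order_refl order_trans)
  from finite_subset_image[OF finite_Diff[OF S(1)] this] obtain P
    where "P \<subseteq> carrier G \<times> balls" "finite P" "S - {{}} = (\<lambda>(a, \<beta>). a <# \<beta>) ` P"
    by blast
  with determined_by_Diff_empty[OF S(3)] that show ?thesis by simp
qed

lemma subgroup_in_definable_set: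
  assumes "X \<in> D k" "X \<subseteq> carrier G" "subgroup H G" "H \<subseteq> X"
  shows "\<exists>\<beta>\<in>balls. finite ((\<lambda>h. h <# \<beta>) ` H) \<and> \<beta> \<subseteq> X <#> X"
proof -
  obtain P where "finite P" "P \<subseteq> carrier G \<times> balls"
    "determined_by (carrier G) ((\<lambda>(a, \<beta>). a <# \<beta>) ` P) X"
    using definable_determined_by_balls[OF assms(1,2)] .
  then show ?thesis using subgroup_in_determined_set assms(3,4) by blast
qed

theorem definable_subgroup_classification:
  assumes "H \<in> D k" "subgroup H G"
  shows "H = carrier G \<or> (\<exists>r\<in>I.
      (subgroup (closed_ball r) G \<and> closed_ball r \<subseteq> H \<and> finite ((\<lambda>h. h <# closed_ball r) ` H)) \<or>
      (subgroup (open_ball r) G \<and> open_ball r \<subseteq> H \<and> finite ((\<lambda>h. h <# open_ball r) ` H)))"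
proof -
  obtain \<beta> where \<beta>: "\<beta> \<in> balls" "finite ((\<lambda>h. h <# \<beta>) ` H)" "\<beta> \<subseteq> H <#> H"
    using subgroup_in_definable_set[OF assms(1) subgroup.subset[OF assms(2)] assms(2)] by blast
  then have "\<beta> \<subseteq> H" "subgroup \<beta> G" using subgroup_mult_id[OF assms(2)] chain_subgroup by auto
  with \<beta>(1,2) show ?thesis
    using subgroup.subset[OF assms(2)] by (cases rule: balls_cases) blast+
qed

lemma infinite_K: "infinite K"
  using uncountable finite_lepoll_infinite[OF infinite_UNIV_nat] by blast

lemma bad_products_definable:
  assumes X: "X \<in> D k"
  shows "{a @ b | a b. a \<in> carrier G \<and> b \<in> carrier G \<and> a \<otimes> b \<notin> X} \<in> D (k + k)"
proof -
  let ?C2 = "{a @ b | a b. a \<in> carrier G \<and> b \<in> carrier G}"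
  let ?M = "{xs @ ys @ (xs \<otimes> ys) | xs ys. xs \<in> carrier G \<and> ys \<in> carrier G}"
  let ?f = "\<lambda>w. take k w \<otimes> drop k w"
  have f: "?f (a @ b) = a \<otimes> b" if "a \<in> carrier G" for a b
    using that carrier_tuples by auto
  have "{w @ ?f w | w. w \<in> ?C2} = ?M"
  proof (intro equalityI subsetI)
    fix z assume "z \<in> {w @ ?f w | w. w \<in> ?C2}"
    then obtain a b where "z = (a @ b) @ ?f (a @ b)" "a \<in> carrier G" "b \<in> carrier G" by blast
    then show "z \<in> ?M"
      using f by auto
  next
    fix z assume "z \<in> ?M"
    then obtain a b where "z = (a @ b) @ ?f (a @ b)" "a \<in> carrier G" "b \<in> carrier G"
      using f by fastforce
    then show "z \<in> {w @ ?f w | w. w \<in> ?C2}" by blast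
  qed
  then have graph: "{w @ ?f w | w. w \<in> ?C2} \<in> D (k + k + k)"
    using mult_definable by (simp add: numeral_3_eq_3 add.assoc)
  have len: "length (?f w) = k" if "w \<in> ?C2" for w
    using that f carrier_tuples by auto
  have "{w \<in> ?C2. ?f w \<in> tuples k - X} \<in> D (k + k)"
    by (rule definable_preimage[OF definable_product[OF carrier_definable carrier_definable]
          graph len definable_Diff_tuples[OF X]])
  moreover have "{w \<in> ?C2. ?f w \<in> tuples k - X} = {a @ b | a b. a \<in> carrier G \<and> b \<in> carrier G \<and> a \<otimes> b \<notin> X}"
  proof (intro equalityI subsetI)
    fix w assume "w \<in> {w \<in> ?C2. ?f w \<in> tuples k - X}"
    then obtain a b where "w = a @ b" "a \<in> carrier G" "b \<in> carrier G" "?f w \<notin> X" by blast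
    with f show "w \<in> {a @ b | a b. a \<in> carrier G \<and> b \<in> carrier G \<and> a \<otimes> b \<notin> X}" by auto
  next
    fix w assume "w \<in> {a @ b | a b. a \<in> carrier G \<and> b \<in> carrier G \<and> a \<otimes> b \<notin> X}"
    then obtain a b where ab: "w = a @ b" "a \<in> carrier G" "b \<in> carrier G" "a \<otimes> b \<notin> X" by blast
    then have "a \<otimes> b \<in> tuples k" using carrier_tuples m_closed by blast
    with ab f show "w \<in> {w \<in> ?C2. ?f w \<in> tuples k - X}" by auto
  qed
  ultimately show ?thesis by simp
qed

text \<open>The pairs \<open>a @ b\<close> with \<open>a \<otimes> b \<notin> X\<close>, together with the squares of the members of \<open>F\<close>,
  form a small family of definable sets with empty intersection; by saturation already a finite
  subfamily has empty intersection.\<close>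

lemma square_in_definable_from_type:
  assumes F: "F \<subseteq> D k" "F \<prec> K" and H: "H = tuples k \<inter> \<Inter>F"
    and X: "X \<in> D k" and HX: "H <#> H \<subseteq> X"
  obtains F0 where "finite F0" "F0 \<subseteq> F" "(carrier G \<inter> \<Inter>F0) <#> (carrier G \<inter> \<Inter>F0) \<subseteq> X"
proof -
  define R where "R = {a @ b | a b. a \<in> carrier G \<and> b \<in> carrier G \<and> a \<otimes> b \<notin> X}"
  define pairs where "pairs Z = {a @ b | a b. a \<in> Z \<and> b \<in> Z}" for Z :: "'m list set"
  have pairs_mem: "a @ b \<in> pairs Z \<longleftrightarrow> a \<in> Z \<and> b \<in> Z" if "Z \<in> D k" "length a = k" for Z a b
    unfolding pairs_def using that definable_subset_tuples by (intro append_mem_concat_iff) auto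
  define \<G> where "\<G> = insert R (pairs ` F)"
  have "\<G> \<subseteq> D (k + k)"
    using F(1) bad_products_definable[OF X] definable_product
    unfolding \<G>_def R_def pairs_def by blast
  moreover have "\<G> \<prec> K"
    unfolding \<G>_def using lesspoll_insert_image[OF infinite_K F(2)] .
  ultimately have saturation: "(\<forall>F'. finite F' \<longrightarrow> F' \<subseteq> \<G> \<longrightarrow> tuples (k + k) \<inter> \<Inter>F' \<noteq> {})
      \<Longrightarrow> tuples (k + k) \<inter> \<Inter>\<G> \<noteq> {}"
    using saturated[unfolded saturated_def, rule_format] by blast
  have "tuples (k + k) \<inter> \<Inter>\<G> = {}"
  proof (rule ccontr)
    assume "tuples (k + k) \<inter> \<Inter>\<G> \<noteq> {}"
    then obtain w where "w \<in> R" and w: "\<forall>Z\<in>F. w \<in> pairs Z" unfolding \<G>_def by blast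
    then obtain a b where ab: "w = a @ b" "a \<in> carrier G" "b \<in> carrier G" "a \<otimes> b \<notin> X"
      unfolding R_def by blast
    then have "length a = k" "length b = k" using carrier_tuples by auto
    moreover have "a \<in> Z \<and> b \<in> Z" if "Z \<in> F" for Z
      using w that F(1) pairs_mem[of Z a b] \<open>length a = k\<close> unfolding ab(1) by blast
    ultimately have "a \<in> H" "b \<in> H" unfolding H by auto
    then have "a \<otimes> b \<in> X" using HX unfolding set_mult_def by blast
    with ab show False by blast
  qed
  with saturation obtain F' where F': "finite F'" "F' \<subseteq> \<G>" "tuples (k + k) \<inter> \<Inter>F' = {}"
    by blast
  have "F' - {R} \<subseteq> pairs ` F" using F'(2) unfolding \<G>_def by blast
  from finite_subset_image[OF finite_Diff[OF F'(1)] this] obtain F0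
    where F0: "F0 \<subseteq> F" "finite F0" "F' - {R} = pairs ` F0" by blast
  have "(carrier G \<inter> \<Inter>F0) <#> (carrier G \<inter> \<Inter>F0) \<subseteq> X"
  proof
    fix z assume "z \<in> (carrier G \<inter> \<Inter>F0) <#> (carrier G \<inter> \<Inter>F0)"
    then obtain a b where ab: "z = a \<otimes> b" "a \<in> carrier G \<inter> \<Inter>F0" "b \<in> carrier G \<inter> \<Inter>F0"
      unfolding set_mult_def by blast
    have len: "a \<in> tuples k" "b \<in> tuples k" using ab carrier_tuples by blast+
    show "z \<in> X"
    proof (rule ccontr)
      assume "z \<notin> X"
      then have "a @ b \<in> R" using ab unfolding R_def by blast
      moreover have "a @ b \<in> pairs Z" if "Z \<in> F0" for Z using ab that unfolding pairs_def by blast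
      moreover have "a @ b \<in> tuples (k + k)" using len by simp
      ultimately show False using F'(3) F0(3) by blast
    qed
  qed
  with F0 that show ?thesis by blast
qed

lemma definable_subgroup_between:
  assumes F: "F \<subseteq> D k" "F \<prec> K" and H: "H = tuples k \<inter> \<Inter>F" "subgroup H G"
    and X: "X \<in> D k" "H \<subseteq> X"
  obtains S where "S \<in> D k" "subgroup S G" "H \<subseteq> S" "S \<subseteq> X"
proof -
  have Hc: "H \<subseteq> carrier G" using subgroup.subset[OF H(2)] .
  have HH: "H <#> H = H" using subgroup_mult_id[OF H(2)] .
  have X': "carrier G \<inter> X \<in> D k" "H <#> H \<subseteq> carrier G \<inter> X"
    using definable_Int[OF carrier_definable X(1)] HH Hc X(2) by auto
  obtain F1 where F1: "finite F1" "F1 \<subseteq> F"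
    and Y1_square: "(carrier G \<inter> \<Inter>F1) <#> (carrier G \<inter> \<Inter>F1) \<subseteq> carrier G \<inter> X"
    using square_in_definable_from_type[OF F H(1) X'] .
  define Y1 where "Y1 = carrier G \<inter> \<Inter>F1"
  have Y1: "Y1 \<in> D k" "H \<subseteq> Y1"
    using definable_Int_finite_Inter[OF F1(1) _ carrier_definable] F1(2) F(1) Hc H(1)
    unfolding Y1_def by auto
  have "H <#> H \<subseteq> Y1" using HH Y1(2) by simp
  obtain F2 where F2: "finite F2" "F2 \<subseteq> F"
    and Y_square: "(carrier G \<inter> \<Inter>F2) <#> (carrier G \<inter> \<Inter>F2) \<subseteq> Y1"
    using square_in_definable_from_type[OF F H(1) Y1(1) \<open>H <#> H \<subseteq> Y1\<close>] .
  define Y where "Y = carrier G \<inter> \<Inter>F2"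
  have "Y \<in> D k" "Y \<subseteq> carrier G" "H \<subseteq> Y"
    using definable_Int_finite_Inter[OF F2(1) _ carrier_definable] F2(2) F(1) Hc H(1)
    unfolding Y_def by auto
  then obtain \<beta> where \<beta>: "\<beta> \<in> balls" "finite ((\<lambda>h. h <# \<beta>) ` H)" "\<beta> \<subseteq> Y <#> Y"
    using subgroup_in_definable_set H(2) by blast
  have \<beta>_sub: "subgroup \<beta> G" using chain_subgroup[OF \<beta>(1)] .
  obtain H0 where H0: "finite H0" "H0 \<subseteq> H" "H \<subseteq> (\<Union>h\<in>H0. h <# \<beta>)"
    using l_coset_representatives[OF \<beta>_sub Hc \<beta>(2)] .
  have "H <#> \<beta> = (\<Union>h\<in>H0. h <# \<beta>)"
    using set_mult_eq_UN_l_cosets[OF \<beta>_sub Hc H0(2,3)] .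
  moreover have "h <# \<beta> \<in> D k" if "h \<in> H0" for h
    using l_coset_definable[OF balls_definable[OF \<beta>(1)] subgroup.subset[OF \<beta>_sub]] that H0(2) Hc
    by blast
  ultimately have "H <#> \<beta> \<in> D k" using H0(1) by (auto intro: definable_finite_Union)
  moreover have "subgroup (H <#> \<beta>) G" using mult_subgroups[OF H(2) \<beta>_sub] .
  moreover have "H \<subseteq> H <#> \<beta>"
  proof
    fix h assume "h \<in> H"
    then have "h = h \<otimes> \<one>" using Hc by auto
    with \<open>h \<in> H\<close> subgroup.one_closed[OF \<beta>_sub] show "h \<in> H <#> \<beta>" unfolding set_mult_def by blast
  qed
  moreover have "H <#> \<beta> \<subseteq> X"
  proof -
    have "\<beta> \<subseteq> Y1" using \<beta>(3) Y_square unfolding Y_def by blast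
    then have "H <#> \<beta> \<subseteq> Y1 <#> Y1" using Y1(2) by (rule mono_set_mult[rotated])
    with Y1_square show ?thesis unfolding Y1_def by blast
  qed
  ultimately show ?thesis using that by blast
qed

theorem type_definable_subgroup_Inter_definable:
  assumes "type_definable D K k H" "subgroup H G"
  shows "\<exists>F. F \<prec> K \<and> (\<forall>H'\<in>F. H' \<in> D k \<and> subgroup H' G) \<and> H = carrier G \<inter> \<Inter>F"
proof -
  obtain F where F: "F \<subseteq> D k" "F \<prec> K" and H: "H = tuples k \<inter> \<Inter>F"
    using assms(1) unfolding type_definable_def by blast
  have "\<exists>S. S \<in> D k \<and> subgroup S G \<and> H \<subseteq> S \<and> S \<subseteq> Z" if "Z \<in> F" for Z
  proof -
    have "Z \<in> D k" "H \<subseteq> Z" using that F(1) H by auto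
    then obtain S where "S \<in> D k" "subgroup S G" "H \<subseteq> S" "S \<subseteq> Z"
      by (rule definable_subgroup_between[OF F H assms(2)])
    then show ?thesis by blast
  qed
  then obtain S where S: "\<And>Z. Z \<in> F \<Longrightarrow> S Z \<in> D k \<and> subgroup (S Z) G \<and> H \<subseteq> S Z \<and> S Z \<subseteq> Z"
    by (metis (no_types))
  have "H = carrier G \<inter> \<Inter>(S ` F)"
  proof
    show "H \<subseteq> carrier G \<inter> \<Inter>(S ` F)" using S subgroup.subset[OF assms(2)] by blast
    show "carrier G \<inter> \<Inter>(S ` F) \<subseteq> H" using S carrier_tuples unfolding H by blast
  qed
  moreover have "S ` F \<prec> K" using image_lepoll F(2) by (rule lesspoll_trans1)
  ultimately show ?thesis using S by blast
qed

end

theorem lemma3p7: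
  fixes D :: "nat \<Rightarrow> 'm list set set" and K :: "'k set"
    and Gr :: "'m list monoid" and k :: nat
    and I :: "'m list set" and l :: nat and le :: "'m list \<Rightarrow> 'm list \<Rightarrow> bool"
    and v :: "'m list \<Rightarrow> 'm list"
  defines "B \<equiv> \<lambda>r. {a \<in> carrier Gr. le r (v a)}"
      and "Bm \<equiv> \<lambda>r. {a \<in> carrier Gr. le r (v a) \<and> r \<noteq> v a}"
  assumes struct: "def_structure D"
    and sat: "saturated D K" and uncountable: "\<not> K \<lesssim> (UNIV :: nat set)"
    and grp: "comm_group Gr"
    and G_def: "carrier Gr \<in> D k"
    and mult_def: "{xs @ ys @ (xs \<otimes>\<^bsub>Gr\<^esub> ys) | xs ys. xs \<in> carrier Gr \<and> ys \<in> carrier Gr} \<in> D (3 * k)"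
    and I_def: "I \<in> D l"
    and le_def: "{xs @ ys | xs ys. xs \<in> I \<and> ys \<in> I \<and> le xs ys} \<in> D (2 * l)"
    and le_refl: "\<forall>x\<in>I. le x x"
    and le_antisym: "\<forall>x\<in>I. \<forall>y\<in>I. le x y \<longrightarrow> le y x \<longrightarrow> x = y"
    and le_trans: "\<forall>x\<in>I. \<forall>y\<in>I. \<forall>z\<in>I. le x y \<longrightarrow> le y z \<longrightarrow> le x z"
    and le_total: "\<forall>x\<in>I. \<forall>y\<in>I. le x y \<or> le y x"
    and v_into: "v ` carrier Gr \<subseteq> I"
    and v_def: "{xs @ v xs | xs. xs \<in> carrier Gr} \<in> D (k + l)"
    and v_add: "\<forall>a\<in>carrier Gr. \<forall>b\<in>carrier Gr.
                  le (v a) (v (a \<otimes>\<^bsub>Gr\<^esub> b)) \<or> le (v b) (v (a \<otimes>\<^bsub>Gr\<^esub> b))"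
    and v_neg: "\<forall>a\<in>carrier Gr. v (inv\<^bsub>Gr\<^esub> a) = v a"
    and v_zero_max: "\<forall>r\<in>I. le r (v \<one>\<^bsub>Gr\<^esub>)"
    and v_zero_only: "\<forall>a\<in>carrier Gr. v a = v \<one>\<^bsub>Gr\<^esub> \<longrightarrow> a = \<one>\<^bsub>Gr\<^esub>"
    and boolean: "\<forall>X\<in>D k. X \<subseteq> carrier Gr \<longrightarrow>
        X \<in> boolcomb (carrier Gr)
          {(\<lambda>x. a \<otimes>\<^bsub>Gr\<^esub> x) ` Y | a Y. a \<in> carrier Gr \<and>
             (Y \<in> B ` I \<or> Y \<in> Bm ` I \<or> Y = {\<one>\<^bsub>Gr\<^esub>} \<or> Y = carrier Gr)}"
    and quot_infinite: "\<forall>r\<in>I. le r (v \<one>\<^bsub>Gr\<^esub>) \<and> r \<noteq> v \<one>\<^bsub>Gr\<^esub> \<longrightarrow>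
        infinite (cosets_in Gr (B r) (Bm r))"
  shows "(\<forall>H. type_definable D K k H \<and> subgroup H Gr \<longrightarrow>
            (\<exists>F. F \<prec> K \<and> (\<forall>H'\<in>F. H' \<in> D k \<and> subgroup H' Gr) \<and>
                 H = carrier Gr \<inter> \<Inter>F))
       \<and> (\<forall>H\<in>D k. subgroup H Gr \<longrightarrow>
            finite H \<or> H = carrier Gr \<or>
            (\<exists>r\<in>I. (subgroup (B r) Gr \<and> B r \<subseteq> H \<and> finite (cosets_in Gr H (B r))) \<or>
                    (subgroup (Bm r) Gr \<and> Bm r \<subseteq> H \<and> finite (cosets_in Gr H (Bm r)))))"
proof -
  interpret V: valued_group Gr I le v
    by (intro valued_group.intro valued_group_axioms.intro grp;
        rule le_refl[rule_format] le_antisym[rule_format] le_trans[rule_format] le_total[rule_format]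
          v_add[rule_format] v_neg[rule_format] v_zero_max[rule_format] v_zero_only[rule_format]
          v_into[unfolded image_subset_iff, rule_format];
        assumption)
  have B_eq: "B = V.closed_ball" and Bm_eq: "Bm = V.open_ball"
    unfolding B_def Bm_def V.closed_ball_def V.open_ball_def by simp_all
  interpret V: definable_valued_group Gr I le v D K k l
  proof (intro definable_valued_group.intro definable_valued_group_axioms.intro)
    show "definable_structure D" using struct by (rule definable_structureI)
    show "X \<in> boolcomb (carrier Gr) {a <#\<^bsub>Gr\<^esub> Y | a Y. a \<in> carrier Gr \<and>
        (Y \<in> V.closed_ball ` I \<or> Y \<in> V.open_ball ` I \<or> Y = {\<one>\<^bsub>Gr\<^esub>} \<or> Y = carrier Gr)}"
      if "X \<in> D k" "X \<subseteq> carrier Gr" for X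
      using boolean that unfolding B_eq Bm_eq l_coset_eq_image by simp
    show "infinite ((\<lambda>a. a <#\<^bsub>Gr\<^esub> V.open_ball r) ` V.closed_ball r)"
      if "r \<in> I" "r \<noteq> v \<one>\<^bsub>Gr\<^esub>" for r
      using quot_infinite that v_zero_max unfolding B_eq Bm_eq cosets_in_eq_image by blast
  qed (fact V.valued_group_axioms sat uncountable G_def mult_def I_def le_def v_def)+
  show ?thesis
    using V.type_definable_subgroup_Inter_definable V.definable_subgroup_classification
    unfolding B_eq Bm_eq cosets_in_eq_image by blast
qed

end
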